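(* Fix any choice function assigning to each nonempty literal $A$ a symbol $a_A\in A$, and write $\partial_A(r):=\partial_{a_A}(r)$. Then for all extended regular expressions $r$ and $s$: \[\llbracket r\rrbracket\subseteq\llbracket s\rrbracket\iff\big(\nu(r)\Rightarrow\nu(s)\big)\ \wedge\ \big(\forall A\in\mathrm{next}(r)\ltimes\mathrm{next}(s),\ A\neq\emptyset:\ \llbracket\partial_A(r)\rrbracket\subseteq\llbracket\partial_A(s)\rrbracket\big).\]
   Context: $\Sigma$ is a countable (possibly infinite) alphabet, $\Sigma^*$ the set of finite words, $\epsilon$ the empty word. Literals are sets of symbols drawn from a fixed family $U\subseteq\mathcal P(\Sigma)$ containing $\emptyset$, $\Sigma$ and all singletons and closed under union, intersection and complement $\overline{A}=\Sigma\setminus A$. Extended regular expressions (EREs) are generated by $r,s ::= \epsilon \mid A \mid r+s \mid r\cdot s \mid r^* \mid r\,\&\,s \mid \neg r$ with $A$ a literal; the empty literal is written $\emptyset$. Semantics: $\llbracket\epsilon\rrbracket=\{\epsilon\}$, $\llbracket A\rrbracket=A$, $\llbracket r+s\rrbracket=\llbracket r\rrbracket\cup\llbracket s\rrbracket$, $\llbracket r\cdot s\rrbracket$ the concatenation, $\llbracket r^*\rrbracket=\llbracket r\rrbracket^*$, $\llbracket r\&s\rrbracket=\llbracket r\rrbracket\cap\llbracket s\rrbracket$, $\llbracket\neg r\rrbracket=\Sigma^*\setminus\llbracket r\rrbracket$. Nullability: $\nu(\epsilon)=\nu(r^* )=\mathit{true}$, $\nu(A)=\mathit{false}$, $\nu(r+s)=\nu(r)\vee\nu(s)$,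 $\nu(r\cdot s)=\nu(r\&s)=\nu(r)\wedge\nu(s)$, $\nu(\neg r)=\neg\nu(r)$. Brzozowski derivative for $a\in\Sigma$: $\partial_a(\epsilon)=\emptyset$; $\partial_a(A)=\epsilon$ if $a\in A$, else $\emptyset$; $\partial_a(r+s)=\partial_a(r)+\partial_a(s)$; $\partial_a(r\cdot s)=\partial_a(r)\cdot s+\partial_a(s)$ if $\nu(r)$, and $\partial_a(r)\cdot s$ otherwise; $\partial_a(r^* )=\partial_a(r)\cdot r^*$; $\partial_a(r\&s)=\partial_a(r)\&\partial_a(s)$; $\partial_a(\neg r)=\neg\partial_a(r)$. Join: $\mathfrak L_1\Join\mathfrak L_2=\{A_1\cap A_2,\ A_1\cap\overline{\bigcup\mathfrak L_2},\ \overline{\bigcup\mathfrak L_1}\cap A_2 \mid A_1\in\mathfrak L_1, A_2\in\mathfrak L_2\}$; left join $\mathfrak L_1\ltimes\mathfrak L_2=\{A_1\cap A_2,\ A_1\cap\overline{\bigcup\mathfrak L_2}\mid A_1\in\mathfrak L_1, A_2\in\mathfrak L_2\}$; $\mathfrak L_1\sqcap\mathfrak L_2=\{A_1\cap A_2\mid A_1\in\mathfrak L_1,A_2\in\mathfrak L_2\}$. Next literals: $\mathrm{next}(\epsilon)=\{\emptyset\}$; $\mathrm{next}(A)=\{A\}$; $\mathrm{next}(r+s)=\mathrm{next}(r)\Join\mathrm{next}(s)$; $\mathrm{next}(r\cdot s)=\mathrm{next}(r)\Join\mathrm{next}(s)$ if $\nu(r)$ and $\mathrm{next}(r)$ otherwise;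 $\mathrm{next}(r^* )=\mathrm{next}(r)$; $\mathrm{next}(r\&s)=\mathrm{next}(r)\sqcap\mathrm{next}(s)$; $\mathrm{next}(\neg r)=\mathrm{next}(r)\cup\{\bigcap_{A\in\mathrm{next}(r)}\overline{A}\}$. *)

theory Defs
  imports "HOL-Library.Countable"
begin

text \<open>Alphabet: a countable type 'a (Sigma = UNIV). Literals are sets of symbols.\<close>

datatype 'a ere =
    Eps
  | Lit "'a set"
  | Alt "'a ere" "'a ere"
  | Cat "'a ere" "'a ere"
  | Star "'a ere"
  | Inter "'a ere" "'a ere"
  | Neg "'a ere"

definition literal_family :: "'a set set \<Rightarrow> bool" where
  "literal_family U \<longleftrightarrow> {} \<in> U \<and> UNIV \<in> U \<and> (\<forall>a. {a} \<in> U) \<and>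
     (\<forall>A\<in>U. \<forall>B\<in>U. A \<union> B \<in> U) \<and> (\<forall>A\<in>U. \<forall>B\<in>U. A \<inter> B \<in> U) \<and>
     (\<forall>A\<in>U. - A \<in> U)"

fun lits :: "'a ere \<Rightarrow> 'a set set" where
  "lits Eps = {}"
| "lits (Lit A) = {A}"
| "lits (Alt r s) = lits r \<union> lits s"
| "lits (Cat r s) = lits r \<union> lits s"
| "lits (Star r) = lits r"
| "lits (Inter r s) = lits r \<union> lits s"
| "lits (Neg r) = lits r"

definition conc :: "'a list set \<Rightarrow> 'a list set \<Rightarrow> 'a list set" where
  "conc L M = {xs @ ys | xs ys. xs \<in> L \<and> ys \<in> M}"

inductive_set kstar :: "'a list set \<Rightarrow> 'a list set" for L where
  kstar_Nil: "[] \<in> kstar L"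
| kstar_app: "xs \<in> L \<Longrightarrow> ys \<in> kstar L \<Longrightarrow> xs @ ys \<in> kstar L"

fun lang :: "'a ere \<Rightarrow> 'a list set" where
  "lang Eps = {[]}"
| "lang (Lit A) = {[a] | a. a \<in> A}"
| "lang (Alt r s) = lang r \<union> lang s"
| "lang (Cat r s) = conc (lang r) (lang s)"
| "lang (Star r) = kstar (lang r)"
| "lang (Inter r s) = lang r \<inter> lang s"
| "lang (Neg r) = - lang r"

fun nullable :: "'a ere \<Rightarrow> bool" where
  "nullable Eps = True"
| "nullable (Lit A) = False"
| "nullable (Alt r s) = (nullable r \<or> nullable s)"
| "nullable (Cat r s) = (nullable r \<and> nullable s)"
| "nullable (Star r) = True"
| "nullable (Inter r s) = (nullable r \<and> nullable s)"
| "nullable (Neg r) = (\<not> nullable r)"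

fun deriv :: "'a \<Rightarrow> 'a ere \<Rightarrow> 'a ere" where
  "deriv a Eps = Lit {}"
| "deriv a (Lit A) = (if a \<in> A then Eps else Lit {})"
| "deriv a (Alt r s) = Alt (deriv a r) (deriv a s)"
| "deriv a (Cat r s) = (if nullable r then Alt (Cat (deriv a r) s) (deriv a s)
                        else Cat (deriv a r) s)"
| "deriv a (Star r) = Cat (deriv a r) (Star r)"
| "deriv a (Inter r s) = Inter (deriv a r) (deriv a s)"
| "deriv a (Neg r) = Neg (deriv a r)"

definition join :: "'a set set \<Rightarrow> 'a set set \<Rightarrow> 'a set set" where
  "join L1 L2 = {A1 \<inter> A2 | A1 A2. A1 \<in> L1 \<and> A2 \<in> L2}
              \<union> {A1 \<inter> - \<Union>L2 | A1 A2. A1 \<in> L1 \<and> A2 \<in> L2}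
              \<union> {- \<Union>L1 \<inter> A2 | A1 A2. A1 \<in> L1 \<and> A2 \<in> L2}"

definition ljoin :: "'a set set \<Rightarrow> 'a set set \<Rightarrow> 'a set set" where
  "ljoin L1 L2 = {A1 \<inter> A2 | A1 A2. A1 \<in> L1 \<and> A2 \<in> L2}
              \<union> {A1 \<inter> - \<Union>L2 | A1 A2. A1 \<in> L1 \<and> A2 \<in> L2}"

definition meet :: "'a set set \<Rightarrow> 'a set set \<Rightarrow> 'a set set" where
  "meet L1 L2 = {A1 \<inter> A2 | A1 A2. A1 \<in> L1 \<and> A2 \<in> L2}"

fun next_lits :: "'a ere \<Rightarrow> 'a set set" where
  "next_lits Eps = {{}}"
| "next_lits (Lit A) = {A}"
| "next_lits (Alt r s) = join (next_lits r) (next_lits s)"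
| "next_lits (Cat r s) = (if nullable r then join (next_lits r) (next_lits s)
                          else next_lits r)"
| "next_lits (Star r) = next_lits r"
| "next_lits (Inter r s) = meet (next_lits r) (next_lits s)"
| "next_lits (Neg r) = next_lits r \<union> {\<Inter>A\<in>next_lits r. - A}"

end

theory Submission
  imports Defs
begin

text \<open>
  A word lies in \<open>lang r\<close> iff it is empty and \<open>r\<close> is nullable, or it is
  \<open>a # v\<close> with \<open>v \<in> lang (deriv a r)\<close>; hence \<open>lang r \<subseteq> lang s\<close> iff nullability is
  inherited and \<open>lang (deriv a r) \<subseteq> lang (deriv a s)\<close> for every symbol \<open>a\<close>.
  The literals \<open>next_lits r\<close> form a "derivative cover" of \<open>r\<close>: any two symbols in a
  common literal give the same derivative language, and symbols outside all of
  them give the empty derivative.  Covers are inherited by refinements, and the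
  join/meet operations refine their arguments, which yields the cover property by
  structural induction.  The cells of \<open>ljoin (next_lits r) (next_lits s)\<close> refine both
  covers and contain every symbol with a nonempty \<open>r\<close>-derivative, so one
  representative per nonempty cell suffices.  Finally the cells are literals of
  the family \<open>U\<close>, so the choice function picks such a representative.
\<close>

section \<open>Derivatives are semantically correct\<close>

lemma nullable_iff: "nullable r \<longleftrightarrow> [] \<in> lang r"
  by (induction r) (auto simp: conc_def intro: kstar.intros)

lemma conc_Cons:
  "a # w \<in> conc L M \<longleftrightarrow>
     (\<exists>u v. w = u @ v \<and> a # u \<in> L \<and> v \<in> M) \<or> ([] \<in> L \<and> a # w \<in> M)"
proof
  assume "a # w \<in> conc L M"
  then obtain xs ys where "a # w = xs @ ys" "xs \<in> L" "ys \<in> M"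
    by (auto simp: conc_def)
  then show "(\<exists>u v. w = u @ v \<and> a # u \<in> L \<and> v \<in> M) \<or> ([] \<in> L \<and> a # w \<in> M)"
    by (cases xs) auto
next
  assume "(\<exists>u v. w = u @ v \<and> a # u \<in> L \<and> v \<in> M) \<or> ([] \<in> L \<and> a # w \<in> M)"
  then show "a # w \<in> conc L M"
    unfolding conc_def by (metis (mono_tags, lifting) CollectI append_Cons append_Nil)
qed

lemma conc_empty_left [simp]: "conc {} M = {}"
  by (simp add: conc_def)

lemma kstar_Cons_D:
  "x \<in> kstar L \<Longrightarrow> x = a # w \<Longrightarrow> \<exists>u v. w = u @ v \<and> a # u \<in> L \<and> v \<in> kstar L"
proof (induction arbitrary: w rule: kstar.induct)
  case (kstar_app xs ys)
  then show ?case by (cases xs) auto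
qed simp

lemma kstar_Cons: "a # w \<in> kstar L \<longleftrightarrow> (\<exists>u v. w = u @ v \<and> a # u \<in> L \<and> v \<in> kstar L)"
  using kstar_Cons_D[of "a # w" L a w] kstar.kstar_app[of "a # _" L] by fastforce

lemma lang_deriv: "lang (deriv a r) = {w. a # w \<in> lang r}"
proof (induction r)
  case (Cat r s)
  then show ?case by (auto simp: conc_Cons nullable_iff) (auto simp: conc_def)
next
  case (Star r)
  then show ?case by (auto simp: kstar_Cons) (auto simp: conc_def)
qed auto

lemma lang_subset_iff_derivs:
  "lang r \<subseteq> lang s \<longleftrightarrow>
     (nullable r \<longrightarrow> nullable s) \<and> (\<forall>a. lang (deriv a r) \<subseteq> lang (deriv a s))"
proof
  assume "lang r \<subseteq> lang s"
  then show "(nullable r \<longrightarrow> nullable s) \<and> (\<forall>a. lang (deriv a r) \<subseteq> lang (deriv a s))"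
    by (auto simp: nullable_iff lang_deriv)
next
  assume H: "(nullable r \<longrightarrow> nullable s) \<and> (\<forall>a. lang (deriv a r) \<subseteq> lang (deriv a s))"
  show "lang r \<subseteq> lang s"
  proof
    fix w assume "w \<in> lang r"
    then show "w \<in> lang s"
      using H by (cases w) (auto simp: nullable_iff lang_deriv)
  qed
qed

section \<open>Derivative covers and refinement\<close>

definition deriv_cover :: "'a set set \<Rightarrow> 'a ere \<Rightarrow> bool" where
  "deriv_cover L r \<longleftrightarrow>
     (\<forall>A\<in>L. \<forall>a\<in>A. \<forall>b\<in>A. lang (deriv a r) = lang (deriv b r)) \<and>
     (\<forall>a. a \<notin> \<Union>L \<longrightarrow> lang (deriv a r) = {})"

definition refines :: "'a set set \<Rightarrow> 'a set set \<Rightarrow> bool" where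
  "refines M L \<longleftrightarrow> (\<forall>A\<in>M. (\<exists>B\<in>L. A \<subseteq> B) \<or> A \<inter> \<Union>L = {})"

lemma deriv_cover_cell:
  "deriv_cover L r \<Longrightarrow> A \<in> L \<Longrightarrow> a \<in> A \<Longrightarrow> b \<in> A \<Longrightarrow> lang (deriv a r) = lang (deriv b r)"
  unfolding deriv_cover_def by blast

lemma deriv_cover_empty:
  "deriv_cover L r \<Longrightarrow> a \<notin> \<Union>L \<Longrightarrow> lang (deriv a r) = {}"
  unfolding deriv_cover_def by blast

lemma deriv_cover_refined_cell:
  assumes "deriv_cover L r" "refines M L" "A \<in> M" "a \<in> A" "b \<in> A"
  shows "lang (deriv a r) = lang (deriv b r)"
proof -
  from assms(2,3) consider B where "B \<in> L" "A \<subseteq> B" | "A \<inter> \<Union>L = {}"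
    unfolding refines_def by blast
  then show ?thesis
  proof cases
    case (1 B)
    then have "a \<in> B" "b \<in> B" using assms(4,5) by blast+
    then show ?thesis by (rule deriv_cover_cell[OF assms(1) \<open>B \<in> L\<close>])
  next
    case 2
    then have "a \<notin> \<Union>L" "b \<notin> \<Union>L" using assms(4,5) by blast+
    then show ?thesis using deriv_cover_empty[OF assms(1)] by simp
  qed
qed

lemma refines_subset: "refines M L \<Longrightarrow> M' \<subseteq> M \<Longrightarrow> refines M' L"
  unfolding refines_def by blast

lemma refines_join_left: "refines (join L1 L2) L1"
  unfolding refines_def join_def by blast

lemma refines_join_right: "refines (join L1 L2) L2"
  unfolding refines_def join_def by blast

lemma refines_meet_left: "refines (meet L1 L2) L1"
  unfolding refines_def meet_def by blast

lemma refines_meet_right: "refines (meet L1 L2) L2"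
  unfolding refines_def meet_def by blast

lemma refines_insert_complement: "refines (insert (\<Inter>A\<in>L. - A) L) L"
  unfolding refines_def by blast

lemma ljoin_subset_join: "ljoin L1 L2 \<subseteq> join L1 L2"
  unfolding ljoin_def join_def by blast

lemma Union_join:
  assumes "L1 \<noteq> {}" "L2 \<noteq> {}"
  shows "\<Union>(join L1 L2) = \<Union>L1 \<union> \<Union>L2"
proof
  show "\<Union>(join L1 L2) \<subseteq> \<Union>L1 \<union> \<Union>L2"
    unfolding join_def by blast
  show "\<Union>L1 \<union> \<Union>L2 \<subseteq> \<Union>(join L1 L2)"
  proof
    fix a assume a: "a \<in> \<Union>L1 \<union> \<Union>L2"
    obtain B1 B2 where B: "B1 \<in> L1" "B2 \<in> L2" using assms by blast
    consider A1 A2 where "A1 \<in> L1" "A2 \<in> L2" "a \<in> A1 \<inter> A2"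
      | A1 where "A1 \<in> L1" "a \<in> A1 \<inter> - \<Union>L2"
      | A2 where "A2 \<in> L2" "a \<in> - \<Union>L1 \<inter> A2"
      using a by blast
    then show "a \<in> \<Union>(join L1 L2)"
    proof cases
      case (1 A1 A2)
      then have "A1 \<inter> A2 \<in> join L1 L2" unfolding join_def by blast
      then show ?thesis using 1 by blast
    next
      case (2 A1)
      then have "A1 \<inter> - \<Union>L2 \<in> join L1 L2" using B unfolding join_def by blast
      then show ?thesis using 2 by blast
    next
      case (3 A2)
      then have "- \<Union>L1 \<inter> A2 \<in> join L1 L2" using B unfolding join_def by blast
      then show ?thesis using 3 by blast
    qed
  qed
qed

lemma Union_meet: "\<Union>(meet L1 L2) = \<Union>L1 \<inter> \<Union>L2"
  unfolding meet_def by blast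

text \<open>The left join covers all of \<open>\<Union>L1\<close> (its cells only drop \<open>\<Union>L2 - \<Union>L1\<close>).\<close>
lemma Union_ljoin:
  assumes "L2 \<noteq> {}"
  shows "\<Union>L1 \<subseteq> \<Union>(ljoin L1 L2)"
proof
  fix a assume "a \<in> \<Union>L1"
  then obtain A1 where A1: "A1 \<in> L1" "a \<in> A1" by blast
  obtain B2 where B2: "B2 \<in> L2" using assms by blast
  show "a \<in> \<Union>(ljoin L1 L2)"
  proof (cases "a \<in> \<Union>L2")
    case True
    then obtain A2 where "A2 \<in> L2" "a \<in> A2" by blast
    then show ?thesis using A1 unfolding ljoin_def by blast
  next
    case False
    then show ?thesis using A1 B2 unfolding ljoin_def by blast
  qed
qed

section \<open>The next literals form a derivative cover\<close>

text \<open>Nonemptiness is what makes the joins cover the union of their arguments.\<close>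
lemma next_lits_nonempty: "next_lits r \<noteq> {}"
  by (induction r) (auto simp: join_def meet_def)

lemma deriv_cover_transfer:
  assumes cover: "deriv_cover L r"
    and same: "\<And>a b. lang (deriv a r) = lang (deriv b r) \<Longrightarrow> lang (deriv a t) = lang (deriv b t)"
    and empty: "\<And>a. lang (deriv a r) = {} \<Longrightarrow> lang (deriv a t) = {}"
  shows "deriv_cover L t"
  unfolding deriv_cover_def
proof (intro conjI ballI allI impI)
  fix A a b assume "A \<in> L" "a \<in> A" "b \<in> A"
  then show "lang (deriv a t) = lang (deriv b t)"
    by (intro same deriv_cover_cell[OF cover])
next
  fix a assume "a \<notin> \<Union>L"
  then show "lang (deriv a t) = {}"
    by (intro empty deriv_cover_empty[OF cover])
qed

lemma deriv_cover_join:
  assumes cover_r: "deriv_cover L1 r" and cover_s: "deriv_cover L2 s"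
    and "L1 \<noteq> {}" "L2 \<noteq> {}"
    and same: "\<And>a b. lang (deriv a r) = lang (deriv b r) \<Longrightarrow>
                  lang (deriv a s) = lang (deriv b s) \<Longrightarrow> lang (deriv a t) = lang (deriv b t)"
    and empty: "\<And>a. lang (deriv a r) = {} \<Longrightarrow> lang (deriv a s) = {} \<Longrightarrow> lang (deriv a t) = {}"
  shows "deriv_cover (join L1 L2) t"
  unfolding deriv_cover_def
proof (intro conjI ballI allI impI)
  fix A a b assume cell: "A \<in> join L1 L2" "a \<in> A" "b \<in> A"
  show "lang (deriv a t) = lang (deriv b t)"
    by (intro same deriv_cover_refined_cell[OF cover_r refines_join_left cell]
        deriv_cover_refined_cell[OF cover_s refines_join_right cell])
next
  fix a assume "a \<notin> \<Union>(join L1 L2)"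
  then have "a \<notin> \<Union>L1" "a \<notin> \<Union>L2" using Union_join[OF assms(3,4)] by blast+
  then show "lang (deriv a t) = {}"
    by (intro empty deriv_cover_empty[OF cover_r] deriv_cover_empty[OF cover_s])
qed

lemma deriv_cover_meet:
  assumes cover_r: "deriv_cover L1 r" and cover_s: "deriv_cover L2 s"
    and same: "\<And>a b. lang (deriv a r) = lang (deriv b r) \<Longrightarrow>
                  lang (deriv a s) = lang (deriv b s) \<Longrightarrow> lang (deriv a t) = lang (deriv b t)"
    and empty: "\<And>a. lang (deriv a r) = {} \<or> lang (deriv a s) = {} \<Longrightarrow> lang (deriv a t) = {}"
  shows "deriv_cover (meet L1 L2) t"
  unfolding deriv_cover_def
proof (intro conjI ballI allI impI)
  fix A a b assume cell: "A \<in> meet L1 L2" "a \<in> A" "b \<in> A"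
  show "lang (deriv a t) = lang (deriv b t)"
    by (intro same deriv_cover_refined_cell[OF cover_r refines_meet_left cell]
        deriv_cover_refined_cell[OF cover_s refines_meet_right cell])
next
  fix a assume "a \<notin> \<Union>(meet L1 L2)"
  then have "a \<notin> \<Union>L1 \<or> a \<notin> \<Union>L2" by (simp add: Union_meet)
  then have "lang (deriv a r) = {} \<or> lang (deriv a s) = {}"
    using deriv_cover_empty[OF cover_r, of a] deriv_cover_empty[OF cover_s, of a] by blast
  then show "lang (deriv a t) = {}" by (rule empty)
qed

text \<open>The version for complements (used for \<open>Neg\<close>): the extra cell collects all
  symbols with empty \<open>r\<close>-derivative, so nothing lies outside the new family.\<close>
lemma deriv_cover_insert_complement:
  assumes cover: "deriv_cover L r"
    and same: "\<And>a b. lang (deriv a r) = lang (deriv b r) \<Longrightarrow> lang (deriv a t) = lang (deriv b t)"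
  shows "deriv_cover (insert (\<Inter>A\<in>L. - A) L) t"
  unfolding deriv_cover_def
proof (intro conjI ballI allI impI)
  fix A a b assume cell: "A \<in> insert (\<Inter>A\<in>L. - A) L" "a \<in> A" "b \<in> A"
  show "lang (deriv a t) = lang (deriv b t)"
    by (intro same deriv_cover_refined_cell[OF cover refines_insert_complement cell])
next
  fix a assume "a \<notin> \<Union>(insert (\<Inter>A\<in>L. - A) L)"
  then show "lang (deriv a t) = {}" by blast
qed

theorem next_lits_deriv_cover: "deriv_cover (next_lits r) r"
proof (induction r)
  case Eps
  show ?case by (simp add: deriv_cover_def)
next
  case (Lit A)
  show ?case by (simp add: deriv_cover_def)
next
  case (Alt r s)
  show ?case
    by (simp, rule deriv_cover_join[OF Alt.IH next_lits_nonempty next_lits_nonempty]) simp_all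
next
  case (Cat r s)
  show ?case
  proof (cases "nullable r")
    case True
    show ?thesis
      by (simp add: True, rule deriv_cover_join[OF Cat.IH next_lits_nonempty next_lits_nonempty])
        (simp_all add: True)
  next
    case False
    show ?thesis
      by (simp add: False, rule deriv_cover_transfer[OF Cat.IH(1)]) (simp_all add: False)
  qed
next
  case (Star r)
  show ?case
    by (simp, rule deriv_cover_transfer[OF Star.IH]) simp_all
next
  case (Inter r s)
  show ?case
    by (simp, rule deriv_cover_meet[OF Inter.IH]) auto
next
  case (Neg r)
  show ?case
    by (simp, rule deriv_cover_insert_complement[OF Neg.IH]) simp
qed

section \<open>Checking inclusion on representatives\<close>

lemma derivs_subset_iff_representatives:
  assumes cover_r: "deriv_cover L r" and cover_s: "deriv_cover M s" and "M \<noteq> {}"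
    and choice: "\<forall>A\<in>ljoin L M. A \<noteq> {} \<longrightarrow> ch A \<in> A"
  shows "(\<forall>a. lang (deriv a r) \<subseteq> lang (deriv a s)) \<longleftrightarrow>
         (\<forall>A\<in>ljoin L M. A \<noteq> {} \<longrightarrow> lang (deriv (ch A) r) \<subseteq> lang (deriv (ch A) s))"
proof
  assume at_representatives:
    "\<forall>A\<in>ljoin L M. A \<noteq> {} \<longrightarrow> lang (deriv (ch A) r) \<subseteq> lang (deriv (ch A) s)"
  show "\<forall>a. lang (deriv a r) \<subseteq> lang (deriv a s)"
  proof
    fix a
    show "lang (deriv a r) \<subseteq> lang (deriv a s)"
    proof (cases "a \<in> \<Union>L")
      case True
      then obtain A where A: "A \<in> ljoin L M" "a \<in> A"
        using Union_ljoin[OF \<open>M \<noteq> {}\<close>] by blast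
      then have ch: "ch A \<in> A" using choice by blast
      have refined: "refines (ljoin L M) L" "refines (ljoin L M) M"
        using refines_subset[OF _ ljoin_subset_join] refines_join_left refines_join_right
        by blast+
      have "lang (deriv a r) = lang (deriv (ch A) r)"
        by (rule deriv_cover_refined_cell[OF cover_r refined(1) A ch])
      also have "\<dots> \<subseteq> lang (deriv (ch A) s)"
        using at_representatives A by blast
      also have "\<dots> = lang (deriv a s)"
        by (rule deriv_cover_refined_cell[OF cover_s refined(2) A(1) ch A(2)])
      finally show ?thesis .
    next
      case False
      then show ?thesis using deriv_cover_empty[OF cover_r] by simp
    qed
  qed
qed blast

section \<open>The next literals belong to the literal family\<close>

lemma literal_family_closed:
  assumes "literal_family U" "A \<in> U" "B \<in> U"
  shows "A \<union> B \<in> U" "A \<inter> B \<in> U" "- A \<in> U"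
  using assms unfolding literal_family_def by blast+

lemma join_in_family:
  assumes "literal_family U" "L1 \<subseteq> U" "L2 \<subseteq> U" "\<Union>L1 \<in> U" "\<Union>L2 \<in> U"
  shows "join L1 L2 \<subseteq> U"
  using assms literal_family_closed[OF assms(1)] unfolding join_def by blast

lemma meet_in_family:
  assumes "literal_family U" "L1 \<subseteq> U" "L2 \<subseteq> U"
  shows "meet L1 L2 \<subseteq> U"
  using assms literal_family_closed[OF assms(1)] unfolding meet_def by blast

text \<open>The next literals, and their union, are literals of \<open>U\<close>.  No finiteness argument
  is needed: the union is tracked along the recursion.\<close>
lemma next_lits_in_family:
  assumes U: "literal_family U"
  shows "lits r \<subseteq> U \<Longrightarrow> next_lits r \<subseteq> U \<and> \<Union>(next_lits r) \<in> U"
proof (induction r)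
  case Eps
  then show ?case using U by (simp add: literal_family_def)
next
  case (Alt r s)
  then have "next_lits r \<subseteq> U" "\<Union>(next_lits r) \<in> U" "next_lits s \<subseteq> U" "\<Union>(next_lits s) \<in> U"
    by simp_all
  then show ?case
    using join_in_family[OF U] literal_family_closed[OF U]
    by (simp add: Union_join[OF next_lits_nonempty next_lits_nonempty])
next
  case (Cat r s)
  then have "next_lits r \<subseteq> U" "\<Union>(next_lits r) \<in> U" "next_lits s \<subseteq> U" "\<Union>(next_lits s) \<in> U"
    by simp_all
  then show ?case
    using join_in_family[OF U] literal_family_closed[OF U]
    by (simp add: Union_join[OF next_lits_nonempty next_lits_nonempty])
next
  case (Inter r s)
  then have "next_lits r \<subseteq> U" "\<Union>(next_lits r) \<in> U" "next_lits s \<subseteq> U" "\<Union>(next_lits s) \<in> U"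
    by simp_all
  then show ?case
    using meet_in_family[OF U] literal_family_closed[OF U] by (simp add: Union_meet)
next
  case (Neg r)
  then have "next_lits r \<subseteq> U" "\<Union>(next_lits r) \<in> U"
    by simp_all
  moreover have "(\<Inter>A\<in>next_lits r. - A) = - \<Union>(next_lits r)"
    by blast
  ultimately show ?case
    using literal_family_closed[OF U] U by (simp add: literal_family_def)
qed simp_all

theorem theorem4:
  fixes U :: "'a::countable set set" and ch :: "'a set \<Rightarrow> 'a" and r s :: "'a ere"
  assumes "literal_family U"
    and "\<forall>A\<in>U. A \<noteq> {} \<longrightarrow> ch A \<in> A"
    and "lits r \<subseteq> U" and "lits s \<subseteq> U"
  shows "lang r \<subseteq> lang s \<longleftrightarrow>
           ((nullable r \<longrightarrow> nullable s) \<and>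
            (\<forall>A\<in>ljoin (next_lits r) (next_lits s). A \<noteq> {} \<longrightarrow>
               lang (deriv (ch A) r) \<subseteq> lang (deriv (ch A) s)))"
proof -
  let ?cells = "ljoin (next_lits r) (next_lits s)"
  have "next_lits r \<subseteq> U" "next_lits s \<subseteq> U" "\<Union>(next_lits r) \<in> U" "\<Union>(next_lits s) \<in> U"
    using next_lits_in_family[OF assms(1) assms(3)] next_lits_in_family[OF assms(1) assms(4)]
    by simp_all
  then have "join (next_lits r) (next_lits s) \<subseteq> U"
    by (rule join_in_family[OF assms(1)])
  then have "?cells \<subseteq> U"
    using ljoin_subset_join by blast
  then have "\<forall>A\<in>?cells. A \<noteq> {} \<longrightarrow> ch A \<in> A"
    using assms(2) by blast
  then have "(\<forall>a. lang (deriv a r) \<subseteq> lang (deriv a s)) \<longleftrightarrow>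
      (\<forall>A\<in>?cells. A \<noteq> {} \<longrightarrow> lang (deriv (ch A) r) \<subseteq> lang (deriv (ch A) s))"
    by (rule derivs_subset_iff_representatives[OF next_lits_deriv_cover next_lits_deriv_cover
          next_lits_nonempty])
  then show ?thesis
    unfolding lang_subset_iff_derivs[of r s] by blast
qed

end
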